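(* Let $x_1,\dots,x_n$ be i.i.d. from a distribution $\mathcal{D}$ on $\{x\in\mathbb{R}^d:\|x\|_2\le1\}$, let $\theta_a^\star\in\mathbb{R}^d$ with $\|\theta_a^\star\|_2\le1$ for $a\in\mathcal{M}=\{1,\dots,N\}$, let $\hat\theta_a\in\mathbb{R}^d$ be arbitrary, and let $\varepsilon:=\max_a\|\hat\theta_a-\theta_a^\star\|_2$. Define $\mu(a;S;x):=\langle\theta_a^\star,x\rangle-\alpha\lambda_a\mathbf{1}\{a\notin S\}$, $\hat\mu(a;S;x):=\langle\hat\theta_a,x\rangle-\alpha\lambda_a\mathbf{1}\{a\notin S\}$, $F(S):=\mathbb{E}_{x\sim\mathcal{D}}[\max_a\mu(a;S;x)]$, $\hat F_n(S):=\frac1n\sum_{t=1}^n\max_a\hat\mu(a;S;x_t)$, and for $\delta'\in(0,1)$ and $1\le K\le N$, $$\rho_n:=\varepsilon+\bar B\sqrt{\frac{2\bigl(K\log(eN/K)+\log(2/\delta')\bigr)}{n}},\qquad \bar B:=2+\alpha\lambda_{\max}.$$ Then with probability at least $1-\delta'$, $\sup_{|S|\le K}|\hat F_n(S)-F(S)|\le\rho_n$. Consequently, if $\hat C\in\arg\max_{|S|\le K}\hat F_n(S)$, then for any fixed $C_0\subseteq\mathcal{M}$ with $|C_0|=K$, $F(C_0)-F(\hat C)\le2\rho_n$.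
   Context: Here $\alpha>0$ and $\lambda_a\in(0,\lambda_{\max}]$ are fixed constants, and $S$ ranges over subsets of $\mathcal{M}$. *)

theory Defs
  imports "HOL-Probability.Probability"
begin

definition mu_val :: "(nat \<Rightarrow> 'a::euclidean_space) \<Rightarrow> real \<Rightarrow> (nat \<Rightarrow> real)
    \<Rightarrow> nat \<Rightarrow> nat set \<Rightarrow> 'a \<Rightarrow> real" where
  "mu_val \<theta> \<alpha> lam a S x = inner (\<theta> a) x - \<alpha> * lam a * (if a \<notin> S then 1 else 0)"

definition F_pop :: "'a::euclidean_space measure \<Rightarrow> nat \<Rightarrow> (nat \<Rightarrow> 'a) \<Rightarrow> real
    \<Rightarrow> (nat \<Rightarrow> real) \<Rightarrow> nat set \<Rightarrow> real" where
  "F_pop D N \<theta> \<alpha> lam S = (\<integral>x. Max ((\<lambda>a. mu_val \<theta> \<alpha> lam a S x) ` {1..N}) \<partial>D)"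

definition F_emp :: "nat \<Rightarrow> (nat \<Rightarrow> 'a::euclidean_space) \<Rightarrow> nat \<Rightarrow> (nat \<Rightarrow> 'a) \<Rightarrow> real
    \<Rightarrow> (nat \<Rightarrow> real) \<Rightarrow> nat set \<Rightarrow> real" where
  "F_emp n xs N \<theta> \<alpha> lam S =
     (1 / real n) * (\<Sum>t = 1..n. Max ((\<lambda>a. mu_val \<theta> \<alpha> lam a S (xs t)) ` {1..N}))"

end

theory Submission
  imports Defs
begin

text \<open>For a fixed set S of arms, x \<mapsto> max_a \<mu>(a;S;x) takes values in [-1 - \<alpha> lam_max, 1],
  an interval of length B, so Hoeffding's inequality controls the deviation of its sample mean
  from F(S); a union bound over the at most (e N / K)^K sets with |S| \<le> K makes this uniform
  in S. Replacing the true parameters \<theta>star by the estimates \<theta>hat moves every max_a \<mu> by at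
  most \<epsilon>, because the maximum is 1-Lipschitz for the sup norm and norm x \<le> 1. Finally, uniform
  accuracy \<rho> lets an empirical maximiser lose at most 2 \<rho> against any competitor.\<close>

lemma card_subsets_card_le:
  assumes "finite A"
  shows "card {S. S \<subseteq> A \<and> card S \<le> K} = (\<Sum>k\<le>K. card A choose k)"
proof -
  have "{S. S \<subseteq> A \<and> card S \<le> K} = (\<Union>k\<le>K. {S. S \<subseteq> A \<and> card S = k})"
    by auto
  also have "card \<dots> = (\<Sum>k\<le>K. card {S. S \<subseteq> A \<and> card S = k})"
    using assms by (intro card_UN_disjoint) (auto intro: finite_subset[of _ "Pow A"])
  also have "\<dots> = (\<Sum>k\<le>K. card A choose k)"
    using assms by (simp add: n_subsets)
  finally show ?thesis .
qed

lemma sum_binomial_le_exp_ratio_power: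
  fixes N K :: nat
  assumes "1 \<le> K" "K \<le> N"
  shows "(\<Sum>k\<le>K. real (N choose k)) \<le> (exp 1 * real N / real K) ^ K"
proof -
  define x where "x = real K / real N"
  have x: "0 < x" "x \<le> 1" using assms by (auto simp: x_def)
  have "x ^ K * (\<Sum>k\<le>K. real (N choose k)) \<le> (\<Sum>k\<le>K. x ^ k * real (N choose k))"
    unfolding sum_distrib_left
    by (intro sum_mono mult_right_mono power_decreasing) (use x in auto)
  also have "\<dots> \<le> (\<Sum>k\<le>N. x ^ k * real (N choose k))"
    by (intro sum_mono2) (use assms x in auto)
  also have "\<dots> = (x + 1) ^ N"
    by (simp add: binomial_ring mult.commute)
  also have "\<dots> \<le> exp x ^ N"
    by (intro power_mono) (use x exp_ge_add_one_self[of x] in \<open>auto simp: add.commute\<close>)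
  also have "\<dots> = exp (real K)"
    using assms by (simp add: x_def flip: exp_of_nat_mult)
  finally have "(\<Sum>k\<le>K. real (N choose k)) \<le> exp (real K) / x ^ K"
    using x by (simp add: field_simps)
  also have "\<dots> = (exp 1 * real N / real K) ^ K"
    using assms by (simp add: x_def power_divide power_mult_distrib flip: exp_of_nat_mult)
  finally show ?thesis .
qed

(* The radius is generous: the Hoeffding exponent below is 4 L, where L = K ln (e N / K) + ln (2 / \<delta>),
   while exponent L would already suffice. *)
lemma subsets_Hoeffding_union_bound_le:
  fixes n N K :: nat and B \<delta> :: real
  assumes K: "1 \<le> K" "K \<le> N" and "1 \<le> n" "0 < B" and \<delta>: "0 < \<delta>" "\<delta> \<le> 2"
  defines "r \<equiv> B * sqrt (2 * (real K * ln (exp 1 * real N / real K) + ln (2 / \<delta>)) / real n)"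
  shows "0 \<le> r"
    and "(exp 1 * real N / real K) ^ K * (2 * exp (- 2 * real n * r\<^sup>2 / B\<^sup>2)) \<le> \<delta>"
proof -
  define c where "c = exp 1 * real N / real K"
  define A where "A = real K * ln c"
  define l where "l = ln (2 / \<delta>)"
  have "exp 1 \<le> c"
    using K by (simp add: c_def field_simps)
  then have "1 \<le> c"
    using one_le_exp_iff[of 1] by linarith
  then have "0 \<le> A"
    by (simp add: A_def)
  have "0 \<le> l"
    using \<delta> by (simp add: l_def)
  have r: "r = B * sqrt (2 * (A + l) / real n)"
    by (simp add: r_def A_def l_def c_def)
  show "0 \<le> r"
    using \<open>0 \<le> A\<close> \<open>0 \<le> l\<close> \<open>0 < B\<close> by (simp add: r)
  have "- 2 * real n * r\<^sup>2 / B\<^sup>2 = - 4 * (A + l)"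
    using \<open>0 \<le> A\<close> \<open>0 \<le> l\<close> \<open>1 \<le> n\<close> \<open>0 < B\<close> by (simp add: r power_mult_distrib field_simps)
  moreover have "c ^ K = exp A"
    using \<open>1 \<le> c\<close> by (simp add: A_def exp_of_nat_mult)
  ultimately have "c ^ K * (2 * exp (- 2 * real n * r\<^sup>2 / B\<^sup>2)) = 2 * exp (- l) * exp (- 3 * (A + l))"
    by (simp add: exp_add[symmetric] algebra_simps)
  also have "\<dots> \<le> 2 * exp (- l)"
    using \<open>0 \<le> A\<close> \<open>0 \<le> l\<close> by simp
  also have "\<dots> = \<delta>"
    using \<delta> by (simp add: l_def exp_minus)
  finally show "(exp 1 * real N / real K) ^ K * (2 * exp (- 2 * real n * r\<^sup>2 / B\<^sup>2)) \<le> \<delta>"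
    by (simp add: c_def)
qed

lemma indep_vars_PiM_components:
  assumes M: "\<And>i. i \<in> I \<Longrightarrow> prob_space (M i)" and I: "finite I" "I \<noteq> {}"
  shows "prob_space.indep_vars (PiM I M) M (\<lambda>i x. x i) I"
proof -
  interpret P: prob_space "PiM I M" using M by (intro prob_space_PiM) auto
  have "distr (PiM I M) (PiM I M) (\<lambda>x. \<lambda>i\<in>I. x i) = distr (PiM I M) (PiM I M) (\<lambda>x. x)"
    by (rule distr_cong) (auto simp: space_PiM PiE_def extensional_restrict)
  also have "\<dots> = PiM I (\<lambda>i. distr (PiM I M) (M i) (\<lambda>x. x i))"
    using M by (simp add: distr_PiM_component cong: PiM_cong)
  finally show ?thesis
    using I by (subst P.indep_vars_iff_distr_eq_PiM') auto
qed

lemma Hoeffding_PiM_sample_mean: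
  fixes g :: "'a \<Rightarrow> real" and \<epsilon> :: real
  assumes D: "prob_space D" and g: "g \<in> borel_measurable D"
    and g_range: "AE x in D. g x \<in> {a..b}" and "a < b"
    and I: "finite I" "I \<noteq> {}" and "\<epsilon> \<ge> 0"
  shows "measure (PiM I (\<lambda>_. D))
           {xs \<in> space (PiM I (\<lambda>_. D)). \<epsilon> \<le> \<bar>(\<Sum>i\<in>I. g (xs i)) / real (card I) - (\<integral>x. g x \<partial>D)\<bar>}
         \<le> 2 * exp (- 2 * real (card I) * \<epsilon>\<^sup>2 / (b - a)\<^sup>2)"
proof -
  let ?P = "PiM I (\<lambda>_. D)"
  interpret P: prob_space ?P using D by (intro prob_space_PiM)
  obtain i0 where i0: "i0 \<in> I" using I by auto
  have proj: "(\<lambda>xs. xs i) \<in> measurable ?P D" if "i \<in> I" for i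
    using that by (rule measurable_component_singleton)
  have distr_proj: "distr ?P D (\<lambda>xs. xs i) = D" if "i \<in> I" for i
    using D that by (intro distr_PiM_component) auto
  have distr_g: "distr ?P borel (\<lambda>xs. g (xs i)) = distr D borel g" if "i \<in> I" for i
    using distr_distr[OF g proj[OF that]] by (simp add: distr_proj[OF that] comp_def)
  interpret iid_interval_bounded_random_variables ?P I "\<lambda>i xs. g (xs i)" "\<lambda>xs. g (xs i0)" a b
  proof
    show "P.indep_vars (\<lambda>_. borel) (\<lambda>i xs. g (xs i)) I"
      using D I g by (intro P.indep_vars_compose2[OF indep_vars_PiM_components]) auto
    show "distr ?P borel (\<lambda>xs. g (xs i)) = distr ?P borel (\<lambda>xs. g (xs i0))" if "i \<in> I" for i
      using that i0 by (simp add: distr_g)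
    show "(\<lambda>xs. g (xs i0)) \<in> borel_measurable ?P"
      using measurable_comp[OF proj[OF i0] g] by (simp add: comp_def)
    show "AE xs in ?P. g (xs i0) \<in> {a..b}"
      using D i0 g_range by (intro AE_PiM_component) auto
  qed (use I in auto)
  interpret Hoeffding_ineq_iid ?P I "\<lambda>i xs. g (xs i)" "\<lambda>xs. g (xs i0)" a b
      "P.expectation (\<lambda>xs. g (xs i0))"
    by intro_locales
  have "P.expectation (\<lambda>xs. g (xs i0)) = (\<integral>x. g x \<partial>D)"
    using integral_distr[OF proj[OF i0] g] by (simp add: distr_proj[OF i0])
  then show ?thesis
    using Hoeffding_ineq_abs_ge'[OF \<open>\<epsilon> \<ge> 0\<close> \<open>a < b\<close> \<open>I \<noteq> {}\<close>] by simp
qed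

lemma uniform_sample_mean_deviation:
  fixes g :: "'s \<Rightarrow> 'a \<Rightarrow> real" and \<epsilon> :: real
  assumes D: "prob_space D" and \<S>: "finite \<S>"
    and g: "\<And>S. S \<in> \<S> \<Longrightarrow> g S \<in> borel_measurable D"
    and g_range: "\<And>S. S \<in> \<S> \<Longrightarrow> AE x in D. g S x \<in> {a..b}" and "a < b"
    and I: "finite I" "I \<noteq> {}" and "\<epsilon> \<ge> 0"
  shows "1 - real (card \<S>) * (2 * exp (- 2 * real (card I) * \<epsilon>\<^sup>2 / (b - a)\<^sup>2))
         \<le> measure (PiM I (\<lambda>_. D)) {xs \<in> space (PiM I (\<lambda>_. D)).
              \<forall>S\<in>\<S>. \<bar>(\<Sum>i\<in>I. g S (xs i)) / real (card I) - (\<integral>x. g S x \<partial>D)\<bar> < \<epsilon>}"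
proof -
  let ?P = "PiM I (\<lambda>_. D)"
  interpret P: prob_space ?P using D by (intro prob_space_PiM)
  define Bad where
    "Bad S = {xs \<in> space ?P. \<epsilon> \<le> \<bar>(\<Sum>i\<in>I. g S (xs i)) / real (card I) - (\<integral>x. g S x \<partial>D)\<bar>}" for S
  have Bad_sets: "Bad S \<in> sets ?P" if "S \<in> \<S>" for S
  proof -
    have [measurable]: "g S \<in> borel_measurable D" using g that .
    show ?thesis unfolding Bad_def by measurable
  qed
  have "measure ?P (\<Union>S\<in>\<S>. Bad S) \<le> (\<Sum>S\<in>\<S>. measure ?P (Bad S))"
    using \<S> Bad_sets by (intro P.finite_measure_subadditive_finite) auto
  also have "\<dots> \<le> real (card \<S>) * (2 * exp (- 2 * real (card I) * \<epsilon>\<^sup>2 / (b - a)\<^sup>2))"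
    using sum_bounded_above[of \<S> "\<lambda>S. measure ?P (Bad S)"]
      Hoeffding_PiM_sample_mean[OF D g g_range \<open>a < b\<close> I \<open>\<epsilon> \<ge> 0\<close>]
    unfolding Bad_def by simp
  finally have "1 - real (card \<S>) * (2 * exp (- 2 * real (card I) * \<epsilon>\<^sup>2 / (b - a)\<^sup>2))
      \<le> measure ?P (space ?P - (\<Union>S\<in>\<S>. Bad S))"
    using \<S> Bad_sets by (subst P.prob_compl) auto
  also have "space ?P - (\<Union>S\<in>\<S>. Bad S) = {xs \<in> space ?P.
              \<forall>S\<in>\<S>. \<bar>(\<Sum>i\<in>I. g S (xs i)) / real (card I) - (\<integral>x. g S x \<partial>D)\<bar> < \<epsilon>}"
    by (auto simp: Bad_def not_le)
  finally show ?thesis .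
qed

lemma abs_Max_image_diff_le:
  fixes f h :: "'i \<Rightarrow> real"
  assumes "finite A" "A \<noteq> {}" "\<And>a. a \<in> A \<Longrightarrow> \<bar>f a - h a\<bar> \<le> e"
  shows "\<bar>Max (f ` A) - Max (h ` A)\<bar> \<le> e"
proof -
  have "Max (f ` A) \<in> f ` A" "Max (h ` A) \<in> h ` A"
    using assms(1,2) by (auto intro!: Max_in)
  then obtain a b where "a \<in> A" "Max (f ` A) = f a" "b \<in> A" "Max (h ` A) = h b"
    by auto
  moreover have "h a \<le> Max (h ` A)" "f b \<le> Max (f ` A)"
    using \<open>a \<in> A\<close> \<open>b \<in> A\<close> assms(1) by auto
  ultimately show ?thesis
    using assms(3)[of a] assms(3)[of b] by auto
qed

lemma abs_mean_diff_le:
  fixes u v :: "'i \<Rightarrow> real"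
  assumes "finite I" "I \<noteq> {}" "\<And>i. i \<in> I \<Longrightarrow> \<bar>u i - v i\<bar> \<le> e"
  shows "\<bar>(\<Sum>i\<in>I. u i) / card I - (\<Sum>i\<in>I. v i) / card I\<bar> \<le> e"
proof -
  have "\<bar>(\<Sum>i\<in>I. u i) - (\<Sum>i\<in>I. v i)\<bar> \<le> (\<Sum>i\<in>I. \<bar>u i - v i\<bar>)"
    by (simp only: sum_subtractf[symmetric] sum_abs)
  also have "\<dots> \<le> card I * e"
    using assms(3) sum_bounded_above[of I "\<lambda>i. \<bar>u i - v i\<bar>" e] by simp
  finally have "\<bar>(\<Sum>i\<in>I. u i) - (\<Sum>i\<in>I. v i)\<bar> / card I \<le> e"
    using assms(1,2) by (simp add: divide_le_eq mult.commute)
  then show ?thesis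
    by (simp add: diff_divide_distrib[symmetric] abs_divide)
qed

lemma uniform_accuracy_iff_SUP_le_and_regret_le:
  fixes F Fhat :: "'s \<Rightarrow> real"
  assumes "finite \<S>" "\<S> \<noteq> {}" "\<C> \<subseteq> \<S>"
  shows "(\<forall>S\<in>\<S>. \<bar>Fhat S - F S\<bar> \<le> \<rho>) \<longleftrightarrow>
           (SUP S\<in>\<S>. \<bar>Fhat S - F S\<bar>) \<le> \<rho> \<and>
           (\<forall>Chat\<in>\<S>. (\<forall>S\<in>\<S>. Fhat S \<le> Fhat Chat) \<longrightarrow> (\<forall>C\<in>\<C>. F C - F Chat \<le> 2 * \<rho>))"
    (is "?dev \<longleftrightarrow> ?SUP \<and> ?regret")
proof -
  have "?SUP \<longleftrightarrow> ?dev"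
    using assms(1,2) by (intro cSUP_le_iff) auto
  moreover have ?regret if ?dev
  proof (intro ballI impI)
    fix Chat C
    assume "Chat \<in> \<S>" "\<forall>S\<in>\<S>. Fhat S \<le> Fhat Chat" "C \<in> \<C>"
    then have "C \<in> \<S>" "Fhat C \<le> Fhat Chat"
      using assms(3) by auto
    moreover have "\<bar>Fhat C - F C\<bar> \<le> \<rho>" "\<bar>Fhat Chat - F Chat\<bar> \<le> \<rho>"
      using \<open>?dev\<close> \<open>Chat \<in> \<S>\<close> \<open>C \<in> \<S>\<close> by auto
    ultimately show "F C - F Chat \<le> 2 * \<rho>"
      by (simp add: abs_le_iff)
  qed
  ultimately show ?thesis
    by blast
qed

definition max_mu_val :: "(nat \<Rightarrow> 'a::euclidean_space) \<Rightarrow> real \<Rightarrow> (nat \<Rightarrow> real)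
    \<Rightarrow> nat \<Rightarrow> nat set \<Rightarrow> 'a \<Rightarrow> real" where
  "max_mu_val \<theta> \<alpha> lam N S x = Max ((\<lambda>a. mu_val \<theta> \<alpha> lam a S x) ` {1..N})"

lemma F_pop_eq_integral_max_mu_val:
  "F_pop D N \<theta> \<alpha> lam S = (\<integral>x. max_mu_val \<theta> \<alpha> lam N S x \<partial>D)"
  by (simp add: F_pop_def max_mu_val_def)

lemma F_emp_eq_mean_max_mu_val:
  "F_emp n xs N \<theta> \<alpha> lam S = (\<Sum>t\<in>{1..n}. max_mu_val \<theta> \<alpha> lam N S (xs t)) / real (card {1..n})"
  by (simp add: F_emp_def max_mu_val_def)

lemma borel_measurable_max_mu_val:
  assumes "sets M = sets borel"
  shows "max_mu_val \<theta> \<alpha> lam N S \<in> borel_measurable M"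
  unfolding measurable_cong_sets[OF assms refl] max_mu_val_def[abs_def] mu_val_def
  by (intro borel_measurable_Max borel_measurable_continuous_onI continuous_intros) simp

lemma max_mu_val_bounds:
  fixes x :: "'a::euclidean_space"
  assumes "1 \<le> N" and "\<forall>a\<in>{1..N}. norm (\<theta> a) \<le> 1"
    and "\<forall>a\<in>{1..N}. 0 \<le> lam a \<and> lam a \<le> lam_max" and "\<alpha> \<ge> 0" and "norm x \<le> 1"
  shows "max_mu_val \<theta> \<alpha> lam N S x \<in> {-1 - \<alpha> * lam_max .. 1}"
proof -
  have elem: "mu_val \<theta> \<alpha> lam a S x \<in> {-1 - \<alpha> * lam_max .. 1}" if a: "a \<in> {1..N}" for a
  proof -
    have "\<bar>inner (\<theta> a) x\<bar> \<le> norm (\<theta> a) * norm x"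
      by (rule Cauchy_Schwarz_ineq2)
    also have "\<dots> \<le> 1"
      using assms a by (intro mult_le_one) auto
    moreover have "0 \<le> \<alpha> * lam a" "\<alpha> * lam a \<le> \<alpha> * lam_max"
      using assms a by (auto intro: mult_left_mono)
    ultimately show ?thesis
      by (auto simp: mu_val_def)
  qed
  have "max_mu_val \<theta> \<alpha> lam N S x \<in> (\<lambda>a. mu_val \<theta> \<alpha> lam a S x) ` {1..N}"
    unfolding max_mu_val_def using assms(1) by (intro Max_in) auto
  then obtain a where "a \<in> {1..N}" "max_mu_val \<theta> \<alpha> lam N S x = mu_val \<theta> \<alpha> lam a S x"
    by blast
  with elem show ?thesis
    by simp
qed

lemma abs_max_mu_val_diff_le:
  fixes x :: "'a::euclidean_space"
  assumes "1 \<le> N" and "norm x \<le> 1" and "\<forall>a\<in>{1..N}. norm (\<theta>1 a - \<theta>2 a) \<le> e"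
  shows "\<bar>max_mu_val \<theta>1 \<alpha> lam N S x - max_mu_val \<theta>2 \<alpha> lam N S x\<bar> \<le> e"
  unfolding max_mu_val_def
proof (rule abs_Max_image_diff_le)
  fix a assume a: "a \<in> {1..N}"
  have "\<bar>mu_val \<theta>1 \<alpha> lam a S x - mu_val \<theta>2 \<alpha> lam a S x\<bar> = \<bar>inner (\<theta>1 a - \<theta>2 a) x\<bar>"
    by (simp add: mu_val_def inner_diff_left)
  also have "\<dots> \<le> norm (\<theta>1 a - \<theta>2 a) * norm x"
    by (rule Cauchy_Schwarz_ineq2)
  also have "\<dots> \<le> e"
    using assms a by (metis mult_left_le norm_ge_zero order_trans)
  finally show "\<bar>mu_val \<theta>1 \<alpha> lam a S x - mu_val \<theta>2 \<alpha> lam a S x\<bar> \<le> e" .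
qed (use assms(1) in auto)

lemma abs_F_emp_diff_le:
  assumes "1 \<le> n" "1 \<le> N" "\<forall>t\<in>{1..n}. norm (xs t) \<le> 1"
    and "\<forall>a\<in>{1..N}. norm (\<theta>1 a - \<theta>2 a) \<le> e"
  shows "\<bar>F_emp n xs N \<theta>1 \<alpha> lam S - F_emp n xs N \<theta>2 \<alpha> lam S\<bar> \<le> e"
  unfolding F_emp_eq_mean_max_mu_val
  using assms by (intro abs_mean_diff_le abs_max_mu_val_diff_le) auto

lemma borel_measurable_F_emp:
  assumes "sets D = sets borel"
  shows "(\<lambda>xs. F_emp n xs N \<theta> \<alpha> lam S) \<in> borel_measurable (PiM {1..n} (\<lambda>_. D))"
proof -
  have [measurable]: "max_mu_val \<theta> \<alpha> lam N S \<in> borel_measurable D"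
    using assms by (rule borel_measurable_max_mu_val)
  show ?thesis
    unfolding F_emp_eq_mean_max_mu_val by measurable
qed

lemma F_emp_uniform_concentration:
  fixes D :: "'a::euclidean_space measure" and \<theta> :: "nat \<Rightarrow> 'a"
    and n N K :: nat and \<alpha> lam_max \<delta> :: real
  assumes D: "prob_space D" "sets D = sets borel" "AE x in D. norm x \<le> 1"
    and "1 \<le> n" and K: "1 \<le> K" "K \<le> N"
    and \<theta>: "\<forall>a\<in>{1..N}. norm (\<theta> a) \<le> 1"
    and "0 \<le> \<alpha>" and lam: "\<forall>a\<in>{1..N}. 0 \<le> lam a \<and> lam a \<le> lam_max"
    and \<delta>: "0 < \<delta>" "\<delta> \<le> 2"
  defines "r \<equiv> (2 + \<alpha> * lam_max) *
    sqrt (2 * (real K * ln (exp 1 * real N / real K) + ln (2 / \<delta>)) / real n)"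
  shows "1 - \<delta> \<le> measure (PiM {1..n} (\<lambda>_. D))
           {xs \<in> space (PiM {1..n} (\<lambda>_. D)). \<forall>S\<in>{S. S \<subseteq> {1..N} \<and> card S \<le> K}.
              \<bar>F_emp n xs N \<theta> \<alpha> lam S - F_pop D N \<theta> \<alpha> lam S\<bar> < r}"
proof -
  define \<S> where "\<S> = {S. S \<subseteq> {1..N} \<and> card S \<le> K}"
  define B where "B = 2 + \<alpha> * lam_max"
  have "1 \<le> N" "0 \<le> lam_max"
    using K lam by force+
  then have "0 < B" "B = 1 - (-1 - \<alpha> * lam_max)"
    using \<open>0 \<le> \<alpha>\<close> by (simp_all add: B_def add_pos_nonneg)
  have r: "0 \<le> r" "(exp 1 * real N / real K) ^ K * (2 * exp (- 2 * real n * r\<^sup>2 / B\<^sup>2)) \<le> \<delta>"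
    using subsets_Hoeffding_union_bound_le[OF K \<open>1 \<le> n\<close> \<open>0 < B\<close> \<delta>] by (simp_all add: r_def B_def)
  have [measurable]: "max_mu_val \<theta> \<alpha> lam N S \<in> borel_measurable D" for S
    using D(2) by (rule borel_measurable_max_mu_val)
  have "real (card \<S>) \<le> (exp 1 * real N / real K) ^ K"
    using card_subsets_card_le[of "{1..N}" K] sum_binomial_le_exp_ratio_power[OF K]
    by (simp add: \<S>_def)
  with r(2) have union_bound: "real (card \<S>) * (2 * exp (- 2 * real n * r\<^sup>2 / B\<^sup>2)) \<le> \<delta>"
    by (meson exp_ge_zero mult_right_mono order_trans zero_le_mult_iff zero_le_numeral)
  moreover have "1 - real (card \<S>) * (2 * exp (- 2 * real (card {1..n}) * r\<^sup>2 / (1 - (-1 - \<alpha> * lam_max))\<^sup>2))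
      \<le> measure (PiM {1..n} (\<lambda>_. D)) {xs \<in> space (PiM {1..n} (\<lambda>_. D)).
           \<forall>S\<in>\<S>. \<bar>F_emp n xs N \<theta> \<alpha> lam S - F_pop D N \<theta> \<alpha> lam S\<bar> < r}"
    unfolding F_emp_eq_mean_max_mu_val F_pop_eq_integral_max_mu_val
  proof (rule uniform_sample_mean_deviation)
    show "AE x in D. max_mu_val \<theta> \<alpha> lam N S x \<in> {-1 - \<alpha> * lam_max .. 1}" for S
      using D(3)
    proof eventually_elim
      case (elim x)
      then show ?case
        using \<open>1 \<le> N\<close> \<theta> \<open>0 \<le> \<alpha>\<close> lam by (intro max_mu_val_bounds)
    qed
  qed (use D \<open>1 \<le> n\<close> \<open>0 < B\<close> \<open>B = 1 - (-1 - \<alpha> * lam_max)\<close> r(1) in \<open>auto simp: \<S>_def\<close>)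
  ultimately show ?thesis
    using \<open>B = 1 - (-1 - \<alpha> * lam_max)\<close> by (simp add: \<S>_def)
qed

lemma F_emp_plug_in_measure_ge:
  fixes \<theta> \<theta>hat :: "nat \<Rightarrow> 'a::euclidean_space" and F :: "nat set \<Rightarrow> real"
  assumes D: "prob_space D" "sets D = sets borel" "AE x in D. norm x \<le> 1"
    and "1 \<le> n" "1 \<le> N" "finite \<S>"
    and \<theta>hat: "\<forall>a\<in>{1..N}. norm (\<theta>hat a - \<theta> a) \<le> \<epsilon>"
    and p: "p \<le> measure (PiM {1..n} (\<lambda>_. D))
              {xs \<in> space (PiM {1..n} (\<lambda>_. D)). \<forall>S\<in>\<S>. \<bar>F_emp n xs N \<theta> \<alpha> lam S - F S\<bar> < r}"
  shows "p \<le> measure (PiM {1..n} (\<lambda>_. D))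
           {xs \<in> space (PiM {1..n} (\<lambda>_. D)). \<forall>S\<in>\<S>. \<bar>F_emp n xs N \<theta>hat \<alpha> lam S - F S\<bar> \<le> \<epsilon> + r}"
proof -
  let ?P = "PiM {1..n} (\<lambda>_. D)"
  interpret P: prob_space ?P
    using D(1) by (intro prob_space_PiM)
  have [measurable]: "(\<lambda>xs. F_emp n xs N \<theta>hat \<alpha> lam S) \<in> borel_measurable ?P" for S
    using D(2) by (rule borel_measurable_F_emp)
  have "measure ?P {xs \<in> space ?P. \<forall>S\<in>\<S>. \<bar>F_emp n xs N \<theta> \<alpha> lam S - F S\<bar> < r}
      \<le> measure ?P {xs \<in> space ?P. \<forall>S\<in>\<S>. \<bar>F_emp n xs N \<theta>hat \<alpha> lam S - F S\<bar> \<le> \<epsilon> + r}"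
    (is "measure ?P ?A \<le> measure ?P ?B")
  proof (rule P.finite_measure_mono_AE)
    have "AE xs in ?P. \<forall>t\<in>{1..n}. norm (xs t) \<le> 1"
      using D(1,3) by (intro AE_finite_allI AE_PiM_component) auto
    then show "AE xs in ?P. xs \<in> ?A \<longrightarrow> xs \<in> ?B"
    proof eventually_elim
      case (elim xs)
      show ?case
      proof (intro impI)
        assume A: "xs \<in> ?A"
        have "\<bar>F_emp n xs N \<theta>hat \<alpha> lam S - F S\<bar> \<le> \<epsilon> + r" if "S \<in> \<S>" for S
        proof -
          have "\<bar>F_emp n xs N \<theta> \<alpha> lam S - F S\<bar> < r"
            using A that by blast
          moreover have "\<bar>F_emp n xs N \<theta>hat \<alpha> lam S - F_emp n xs N \<theta> \<alpha> lam S\<bar> \<le> \<epsilon>"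
            using \<open>1 \<le> n\<close> \<open>1 \<le> N\<close> elim \<theta>hat by (rule abs_F_emp_diff_le)
          ultimately show ?thesis
            by linarith
        qed
        with A show "xs \<in> ?B"
          by blast
      qed
    qed
    show "?B \<in> sets ?P"
      using \<open>finite \<S>\<close> by measurable
  qed
  with p show ?thesis
    by linarith
qed

theorem lemmaD5:
  fixes D :: "'a::euclidean_space measure"
    and n N K :: nat
    and \<theta>star \<theta>hat :: "nat \<Rightarrow> 'a"
    and \<alpha> lam_max \<delta>' :: real
    and lam :: "nat \<Rightarrow> real"
  assumes D_prob: "prob_space D"
    and D_sets: "sets D = sets borel"
    and D_ball: "AE x in D. norm x \<le> 1"
    and n_pos: "n \<ge> 1"
    and K_ge: "1 \<le> K" and K_le: "K \<le> N"
    and \<theta>star_norm: "\<forall>a\<in>{1..N}. norm (\<theta>star a) \<le> 1"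
    and \<alpha>_pos: "\<alpha> > 0"
    and lam_range: "\<forall>a\<in>{1..N}. 0 < lam a \<and> lam a \<le> lam_max"
    and \<delta>_range: "0 < \<delta>'" "\<delta>' < 1"
  shows
    "let \<epsilon> = Max ((\<lambda>a. norm (\<theta>hat a - \<theta>star a)) ` {1..N});
         B = 2 + \<alpha> * lam_max;
         \<rho> = \<epsilon> + B * sqrt (2 * (real K * ln (exp 1 * real N / real K) + ln (2 / \<delta>')) / real n);
         F = F_pop D N \<theta>star \<alpha> lam
     in measure (PiM {1..n} (\<lambda>_. D))
          {xs \<in> space (PiM {1..n} (\<lambda>_. D)).
             (SUP S\<in>{S. S \<subseteq> {1..N} \<and> card S \<le> K}.
                 \<bar>F_emp n xs N \<theta>hat \<alpha> lam S - F S\<bar>) \<le> \<rho>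
           \<and> (\<forall>Chat. Chat \<subseteq> {1..N} \<and> card Chat \<le> K \<and>
                (\<forall>S. S \<subseteq> {1..N} \<and> card S \<le> K \<longrightarrow>
                    F_emp n xs N \<theta>hat \<alpha> lam S \<le> F_emp n xs N \<theta>hat \<alpha> lam Chat)
                \<longrightarrow> (\<forall>C0. C0 \<subseteq> {1..N} \<and> card C0 = K \<longrightarrow> F C0 - F Chat \<le> 2 * \<rho>))}
        \<ge> 1 - \<delta>'"
proof -
  define \<epsilon> where "\<epsilon> = Max ((\<lambda>a. norm (\<theta>hat a - \<theta>star a)) ` {1..N})"
  define r where "r = (2 + \<alpha> * lam_max) *
    sqrt (2 * (real K * ln (exp 1 * real N / real K) + ln (2 / \<delta>')) / real n)"
  define \<S> where "\<S> = {S. S \<subseteq> {1..N} \<and> card S \<le> K}"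
  define \<C> where "\<C> = {C0. C0 \<subseteq> {1..N} \<and> card C0 = K}"
  let ?P = "PiM {1..n} (\<lambda>_. D)"
  have "1 \<le> N"
    using K_ge K_le by simp
  have \<S>: "finite \<S>" "\<S> \<noteq> {}" "\<C> \<subseteq> \<S>"
    unfolding \<S>_def \<C>_def by (auto intro: finite_subset[of _ "Pow {1..N}"])
  have \<epsilon>: "\<forall>a\<in>{1..N}. norm (\<theta>hat a - \<theta>star a) \<le> \<epsilon>"
    by (simp add: \<epsilon>_def)
  have "1 - \<delta>' \<le> measure ?P {xs \<in> space ?P.
          \<forall>S\<in>\<S>. \<bar>F_emp n xs N \<theta>star \<alpha> lam S - F_pop D N \<theta>star \<alpha> lam S\<bar> < r}"
    unfolding r_def \<S>_def
    using D_prob D_sets D_ball n_pos K_ge K_le \<theta>star_norm \<alpha>_pos lam_range \<delta>_range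
    by (intro F_emp_uniform_concentration) auto
  then have "1 - \<delta>' \<le> measure ?P {xs \<in> space ?P.
               \<forall>S\<in>\<S>. \<bar>F_emp n xs N \<theta>hat \<alpha> lam S - F_pop D N \<theta>star \<alpha> lam S\<bar> \<le> \<epsilon> + r}"
    by (rule F_emp_plug_in_measure_ge[OF D_prob D_sets D_ball n_pos \<open>1 \<le> N\<close> \<S>(1) \<epsilon>])
  also have "\<dots> = measure ?P {xs \<in> space ?P.
      (SUP S\<in>\<S>. \<bar>F_emp n xs N \<theta>hat \<alpha> lam S - F_pop D N \<theta>star \<alpha> lam S\<bar>) \<le> \<epsilon> + r \<and>
      (\<forall>Chat\<in>\<S>. (\<forall>S\<in>\<S>. F_emp n xs N \<theta>hat \<alpha> lam S \<le> F_emp n xs N \<theta>hat \<alpha> lam Chat) \<longrightarrow>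
        (\<forall>C0\<in>\<C>. F_pop D N \<theta>star \<alpha> lam C0 - F_pop D N \<theta>star \<alpha> lam Chat \<le> 2 * (\<epsilon> + r)))}"
    by (simp only: uniform_accuracy_iff_SUP_le_and_regret_le[OF \<S>])
  finally show ?thesis
    by (simp add: Let_def \<epsilon>_def r_def \<S>_def \<C>_def imp_conjL)
qed

end
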